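(* If $G$ is a connected graph, then $F_c(G)\ge b(G)+1$, and this bound is sharp.
   Context: Forcing process: given a set of initially colored vertices, at each step a colored vertex with exactly one non-colored neighbor forces (colors) that neighbor. A set $S\subseteq V(G)$ is a forcing set if iterating this process from $S$ eventually colors all vertices; it is a connected forcing set if moreover the induced subgraph $G[S]$ is connected. $F_c(G)$ is the minimum cardinality of a connected forcing set of $G$. A block of $G$ is a maximal connected subgraph with no cut vertex of its own; every block of order at least $2$ is either $2$-connected or isomorphic to $K_2$. $b(G)$ denotes the number of $2$-connected blocks of $G$ (blocks of order at least $2$ not isomorphic to $K_2$). Graphs are assumed to have no isolated vertices. *)

theory Defs
  imports Main
begin

text \<open>A finite simple graph given by a vertex set V and a set E of 2-element edges,
  with no isolated vertices (standing assumption of the paper).\<close>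
definition graph :: "'a set \<Rightarrow> 'a set set \<Rightarrow> bool" where
  "graph V E \<longleftrightarrow> finite V
     \<and> E \<subseteq> {e. \<exists>u v. e = {u, v} \<and> u \<noteq> v \<and> u \<in> V \<and> v \<in> V}
     \<and> (\<forall>v\<in>V. \<exists>e\<in>E. v \<in> e)"

definition connected_on :: "'a set set \<Rightarrow> 'a set \<Rightarrow> bool" where
  "connected_on E S \<longleftrightarrow> S \<noteq> {} \<and>
     (\<forall>u\<in>S. \<forall>v\<in>S. (\<lambda>x y. x \<in> S \<and> y \<in> S \<and> {x, y} \<in> E)\<^sup>*\<^sup>* u v)"

inductive_set forced :: "'a set set \<Rightarrow> 'a set \<Rightarrow> 'a set" for E S where
  init: "s \<in> S \<Longrightarrow> s \<in> forced E S"
| force: "\<lbrakk>u \<in> forced E S; {u, v} \<in> E;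
           \<And>w. {u, w} \<in> E \<Longrightarrow> w \<noteq> v \<Longrightarrow> w \<in> forced E S\<rbrakk> \<Longrightarrow> v \<in> forced E S"

definition forcing_set :: "'a set \<Rightarrow> 'a set set \<Rightarrow> 'a set \<Rightarrow> bool" where
  "forcing_set V E S \<longleftrightarrow> S \<subseteq> V \<and> V \<subseteq> forced E S"

definition connected_forcing_set :: "'a set \<Rightarrow> 'a set set \<Rightarrow> 'a set \<Rightarrow> bool" where
  "connected_forcing_set V E S \<longleftrightarrow> forcing_set V E S \<and> connected_on E S"

definition F_c :: "'a set \<Rightarrow> 'a set set \<Rightarrow> nat" where
  "F_c V E = Min (card ` {S. connected_forcing_set V E S})"

definition nonsep :: "'a set set \<Rightarrow> 'a set \<Rightarrow> bool" where
  "nonsep E B \<longleftrightarrow> connected_on E B \<and>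
     (\<forall>x\<in>B. B - {x} \<noteq> {} \<longrightarrow> connected_on E (B - {x}))"

text \<open>Blocks: maximal such vertex sets (a maximal subgraph without cut vertex is induced).\<close>
definition is_block :: "'a set \<Rightarrow> 'a set set \<Rightarrow> 'a set \<Rightarrow> bool" where
  "is_block V E B \<longleftrightarrow> B \<subseteq> V \<and> nonsep E B \<and> (\<forall>B'. B \<subset> B' \<and> B' \<subseteq> V \<longrightarrow> \<not> nonsep E B')"

text \<open>b(G): number of 2-connected blocks, i.e. blocks of order at least 2 not isomorphic
  to K2; in a simple graph a block of order 2 is K2, so these are the blocks of order \<ge> 3.\<close>
definition b :: "'a set \<Rightarrow> 'a set set \<Rightarrow> nat" where
  "b V E = card {B. is_block V E B \<and> card B \<ge> 3}"

end

theory Submission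
  imports Defs "HOL-Library.Transitive_Closure_Table"
begin

text \<open>Let S be a connected forcing set and B a block with at least three vertices. If S met B
  in at most one vertex v, then S would lie in v together with the components of G - B attached
  at v. This set is closed under forcing: v has two neighbours inside B, and no vertex outside B
  is adjacent to a vertex of B other than v, since such an edge would close a path around v that
  enlarges the block. So S contains two vertices of every such block.

  Fix r in S and a function d that decreases along some edge at every vertex other than r (the
  distance from r). In every block the d-minimal vertex is unique, so every block contains a
  vertex of S that is not its nearest vertex. This vertex is not r, and it determines the block:
  two blocks through x both containing vertices nearer than x would be joined by a walk avoiding
  x. Hence b(G) < |S|. Equality holds for a chain of k triangles glued at vertices, whose even
  vertices form a connected forcing set of size k + 1.\<close>

definition adj_in :: "'a set set \<Rightarrow> 'a set \<Rightarrow> 'a \<Rightarrow> 'a \<Rightarrow> bool" where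
  "adj_in E X x y \<longleftrightarrow> x \<in> X \<and> y \<in> X \<and> {x, y} \<in> E"

lemma connected_on_iff:
  "connected_on E S \<longleftrightarrow> S \<noteq> {} \<and> (\<forall>u\<in>S. \<forall>v\<in>S. (adj_in E S)\<^sup>*\<^sup>* u v)"
  unfolding connected_on_def adj_in_def[abs_def] ..

lemma rtranclp_adj_in_sym: "(adj_in E X)\<^sup>*\<^sup>* x y \<Longrightarrow> (adj_in E X)\<^sup>*\<^sup>* y x"
  by (induction rule: rtranclp_induct)
    (auto simp: adj_in_def insert_commute intro: converse_rtranclp_into_rtranclp)

lemma rtranclp_adj_in_mono: "X \<subseteq> Y \<Longrightarrow> (adj_in E X)\<^sup>*\<^sup>* x y \<Longrightarrow> (adj_in E Y)\<^sup>*\<^sup>* x y"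
  by (erule rtranclp_mono[THEN predicate2D, rotated]) (auto simp: adj_in_def)

lemma connected_onI:
  assumes "r \<in> X" "\<And>x. x \<in> X \<Longrightarrow> (adj_in E X)\<^sup>*\<^sup>* x r"
  shows "connected_on E X"
  unfolding connected_on_iff
proof (intro conjI ballI)
  fix u v assume "u \<in> X" "v \<in> X"
  then show "(adj_in E X)\<^sup>*\<^sup>* u v"
    using rtranclp_trans[OF assms(2) rtranclp_adj_in_sym[OF assms(2)]] by blast
qed (use assms(1) in blast)

lemma connected_on_singleton: "connected_on E {x}"
  by (simp add: connected_on_iff)

lemma connected_on_edge:
  assumes "{x, y} \<in> E"
  shows "connected_on E {x, y}"
proof (rule connected_onI[of x])
  have "adj_in E {x, y} y x" using assms by (simp add: adj_in_def insert_commute)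
  then show "(adj_in E {x, y})\<^sup>*\<^sup>* z x" if "z \<in> {x, y}" for z
    using that by auto
qed simp

lemma connected_on_Un:
  assumes X: "connected_on E X" and Y: "connected_on E Y" and c: "c \<in> X" "c \<in> Y"
  shows "connected_on E (X \<union> Y)"
proof (rule connected_onI[of c])
  fix x assume "x \<in> X \<union> Y"
  then consider "x \<in> X" | "x \<in> Y" by blast
  then show "(adj_in E (X \<union> Y))\<^sup>*\<^sup>* x c"
  proof cases
    case 1
    with X c show ?thesis
      unfolding connected_on_iff by (blast intro: rtranclp_adj_in_mono[of X])
  next
    case 2
    with Y c show ?thesis
      unfolding connected_on_iff by (blast intro: rtranclp_adj_in_mono[of Y])
  qed
qed (use c in simp)

lemma connected_on_Un_edge:
  assumes "connected_on E X" "connected_on E Y" "x \<in> X" "y \<in> Y" "{x, y} \<in> E"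
  shows "connected_on E (X \<union> Y)"
proof -
  have "connected_on E (X \<union> {x, y})"
    using connected_on_Un[OF assms(1) connected_on_edge[OF assms(5)] assms(3)] by simp
  then have "connected_on E ((X \<union> {x, y}) \<union> Y)"
    by (rule connected_on_Un[OF _ assms(2), of _ y]) (use assms(4) in auto)
  moreover have "(X \<union> {x, y}) \<union> Y = X \<union> Y" using assms(3,4) by blast
  ultimately show ?thesis by simp
qed

abbreviation walk :: "'a set set \<Rightarrow> 'a list \<Rightarrow> bool" where
  "walk E ps \<equiv> successively (\<lambda>x y. {x, y} \<in> E) ps"

lemma connected_on_walk: "walk E ps \<Longrightarrow> ps \<noteq> [] \<Longrightarrow> connected_on E (set ps)"
proof (induction ps rule: induct_list012)
  case (3 x y ys)
  then have "connected_on E {x, y}" "connected_on E (set (y # ys))"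
    by (auto intro: connected_on_edge)
  then have "connected_on E ({x, y} \<union> set (y # ys))"
    by (rule connected_on_Un[of _ _ _ y]) auto
  moreover have "{x, y} \<union> set (y # ys) = set (x # y # ys)" by auto
  ultimately show ?case by simp
qed (auto intro: connected_on_singleton)

lemma rtrancl_path_adj_in_walk:
  "rtrancl_path (adj_in E X) u xs v \<Longrightarrow> u \<in> X \<Longrightarrow>
     walk E (u # xs) \<and> set (u # xs) \<subseteq> X \<and> last (u # xs) = v"
  by (induction rule: rtrancl_path.induct) (auto simp: adj_in_def)

lemma rtranclp_adj_in_walk:
  assumes "(adj_in E X)\<^sup>*\<^sup>* u v" "u \<in> X"
  obtains ps where "walk E ps" "distinct ps" "ps \<noteq> []" "hd ps = u" "last ps = v" "set ps \<subseteq> X"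
proof -
  obtain xs where "rtrancl_path (adj_in E X) u xs v" "distinct (u # xs)"
    using assms(1) by (metis rtranclp_eq_rtrancl_path rtrancl_path_distinct)
  with rtrancl_path_adj_in_walk[OF _ assms(2)] show thesis
    using that[of "u # xs"] by simp
qed

lemma rtranclp_adj_in_first_hit:
  assumes "(adj_in E X)\<^sup>*\<^sup>* s t" "t \<in> Y" "s \<notin> Y"
  shows "\<exists>w v. v \<in> X \<inter> Y \<and> (adj_in E (X - Y))\<^sup>*\<^sup>* s w \<and> {w, v} \<in> E"
  using assms
proof (induction rule: converse_rtranclp_induct)
  case (step s s')
  show ?case
  proof (cases "s' \<in> Y")
    case True
    then show ?thesis using step by (auto simp: adj_in_def)
  next
    case False
    then obtain w v where wv: "v \<in> X \<inter> Y" "(adj_in E (X - Y))\<^sup>*\<^sup>* s' w" "{w, v} \<in> E"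
      using step by blast
    have "adj_in E (X - Y) s s'" using step False by (auto simp: adj_in_def)
    then show ?thesis using converse_rtranclp_into_rtranclp[OF _ wv(2)] wv(1,3) by blast
  qed
qed simp

lemma connected_on_neighbor:
  assumes "connected_on E X" "x \<in> X" "z \<in> X" "x \<noteq> z"
  obtains y where "y \<in> X" "{x, y} \<in> E"
proof -
  have "(adj_in E X)\<^sup>*\<^sup>* x z" using assms(1-3) unfolding connected_on_iff by blast
  then show thesis
    using assms(4) that by (cases rule: converse_rtranclpE) (auto simp: adj_in_def)
qed

lemma graph_edge: "graph V E \<Longrightarrow> {x, y} \<in> E \<Longrightarrow> x \<in> V \<and> y \<in> V \<and> x \<noteq> y"
  unfolding graph_def by (auto simp: doubleton_eq_iff)

lemma card_ge_3_ex_other: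
  assumes "3 \<le> card B"
  obtains z where "z \<in> B" "z \<noteq> a" "z \<noteq> c"
proof -
  have "card {a, c} \<le> 2" by (cases "a = c") auto
  then have "\<not> B \<subseteq> {a, c}" using card_mono[of "{a, c}" B] assms by auto
  then show thesis using that by blast
qed

lemma connected_on_Un_walk:
  assumes "connected_on E Y" "walk E qs" "qs \<noteq> [] \<Longrightarrow> \<exists>y\<in>Y. \<exists>q\<in>set qs. {y, q} \<in> E"
  shows "connected_on E (Y \<union> set qs)"
proof (cases "qs = []")
  case False
  then obtain y q where "y \<in> Y" "q \<in> set qs" "{y, q} \<in> E" using assms(3) by blast
  then show ?thesis using connected_on_Un_edge[OF assms(1) connected_on_walk[OF assms(2) False]] by blast
qed (simp add: assms(1))

lemma connected_on_Un_walk_Diff: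
  assumes cB: "connected_on E B" and a: "a \<in> B" and c: "c \<in> B"
    and ps: "walk E ps" "distinct ps" "ps \<noteq> []" and ends: "{a, hd ps} \<in> E" "{last ps, c} \<in> E"
    and z: "z \<notin> B"
  shows "connected_on E (B \<union> set ps - {z})"
proof (cases "z \<in> set ps")
  case False
  have "connected_on E (B \<union> set ps)"
    using connected_on_Un_walk[OF cB ps(1)] a ends(1) hd_in_set[OF ps(3)] by blast
  moreover have "B \<union> set ps - {z} = B \<union> set ps" using False z by blast
  ultimately show ?thesis by simp
next
  case True
  then obtain i where i: "i < length ps" "ps ! i = z" by (meson in_set_conv_nth)
  define L R where "L = take i ps" and "R = drop (Suc i) ps"
  have split: "ps = L @ z # R" using i id_take_nth_drop unfolding L_def R_def by metis
  have walks: "walk E L" "walk E R"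
    using ps(1) unfolding split successively_append_iff by (auto simp: successively_Cons)
  have BL: "connected_on E (B \<union> set L)"
  proof (rule connected_on_Un_walk[OF cB walks(1)])
    assume "L \<noteq> []"
    then have "hd L \<in> set L" "hd L = hd ps" using split by simp_all
    with a ends(1) show "\<exists>y\<in>B. \<exists>q\<in>set L. {y, q} \<in> E" by metis
  qed
  have "connected_on E ((B \<union> set L) \<union> set R)"
  proof (rule connected_on_Un_walk[OF BL walks(2)])
    assume "R \<noteq> []"
    then have "last R \<in> set R" "last R = last ps" using split by simp_all
    with c ends(2) show "\<exists>y\<in>B \<union> set L. \<exists>q\<in>set R. {y, q} \<in> E"
      by (metis UnI1 insert_commute)
  qed
  moreover have "B \<union> set ps - {z} = (B \<union> set L) \<union> set R"
    using ps(2) z unfolding split by auto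
  ultimately show ?thesis by simp
qed

lemma nonsep_Un_walk:
  assumes nB: "nonsep E B" and a: "a \<in> B" and c: "c \<in> B" and ac: "a \<noteq> c"
    and ps: "walk E ps" "distinct ps" "ps \<noteq> []" "set ps \<inter> B = {}"
    and ends: "{a, hd ps} \<in> E" "{last ps, c} \<in> E"
  shows "nonsep E (B \<union> set ps)"
proof -
  have cB: "connected_on E B" using nB by (simp add: nonsep_def)
  have remove: "connected_on E (B \<union> set ps - {z})" for z
  proof (cases "z \<in> B")
    case True
    have "B - {z} \<noteq> {}" using a c ac by blast
    with True nB have cBz: "connected_on E (B - {z})" by (simp add: nonsep_def)
    have "\<exists>y\<in>B - {z}. \<exists>q\<in>set ps. {y, q} \<in> E"
      using a c ac ends hd_in_set[OF ps(3)] last_in_set[OF ps(3)]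
      by (cases "z = a") (auto simp: insert_commute)
    then have "connected_on E ((B - {z}) \<union> set ps)" by (rule connected_on_Un_walk[OF cBz ps(1)])
    moreover have "B \<union> set ps - {z} = (B - {z}) \<union> set ps" using True ps(4) by blast
    ultimately show ?thesis by simp
  qed (rule connected_on_Un_walk_Diff[OF cB a c ps(1-3) ends])
  have "connected_on E (B \<union> set ps)"
    using connected_on_Un_walk[OF cB ps(1)] a ends(1) hd_in_set[OF ps(3)] by blast
  with remove show ?thesis by (simp add: nonsep_def)
qed

lemma block_no_detour:
  assumes B: "is_block V E B" and a: "a \<in> B" and c: "c \<in> B" and ac: "a \<noteq> c"
    and A: "A \<subseteq> V - B" and w: "w \<in> A" "{a, w} \<in> E"
    and ww': "(adj_in E A)\<^sup>*\<^sup>* w w'" and w'c: "{w', c} \<in> E"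
  shows False
proof -
  obtain ps where ps: "walk E ps" "distinct ps" "ps \<noteq> []" "hd ps = w" "last ps = w'" "set ps \<subseteq> A"
    using rtranclp_adj_in_walk[OF ww' w(1)] .
  have BV: "nonsep E B" "B \<subseteq> V" using B by (auto simp: is_block_def)
  have "set ps \<inter> B = {}" using ps(6) A by blast
  then have "nonsep E (B \<union> set ps)"
    using nonsep_Un_walk[OF BV(1) a c ac ps(1-3)] w(2) w'c ps(4,5) by simp
  moreover have "B \<subset> B \<union> set ps"
    using ps(4) hd_in_set[OF ps(3)] w(1) A by blast
  moreover have "B \<union> set ps \<subseteq> V" using ps(6) A BV(2) by blast
  ultimately show False using B unfolding is_block_def by blast
qed

lemma nonsep_Un:
  assumes n1: "nonsep E B1" and n2: "nonsep E B2"
    and x: "x \<in> B1" "x \<in> B2" and y: "y \<in> B1" "y \<in> B2" and xy: "x \<noteq> y"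
  shows "nonsep E (B1 \<union> B2)"
proof -
  have remove: "connected_on E (B - {z})" if "nonsep E B" "x \<in> B" "y \<in> B" for B z
  proof (cases "z \<in> B")
    case True
    have "B - {z} \<noteq> {}" using that xy by blast
    with True that(1) show ?thesis by (simp add: nonsep_def)
  qed (use that(1) in \<open>simp add: nonsep_def\<close>)
  have "connected_on E (B1 \<union> B2)"
    using n1 n2 x by (intro connected_on_Un) (auto simp: nonsep_def)
  moreover have "connected_on E (B1 \<union> B2 - {z})" for z
  proof -
    have "connected_on E ((B1 - {z}) \<union> (B2 - {z}))"
    proof (cases "z = x")
      case True
      then show ?thesis using remove[OF n1 x(1) y(1)] remove[OF n2 x(2) y(2)] y xy
        by (intro connected_on_Un[of _ _ _ y]) auto
    next
      case False
      then show ?thesis using remove[OF n1 x(1) y(1)] remove[OF n2 x(2) y(2)] x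
        by (intro connected_on_Un[of _ _ _ x]) auto
    qed
    then show ?thesis by (simp add: Un_Diff)
  qed
  ultimately show ?thesis by (simp add: nonsep_def)
qed

lemma blocks_share_at_most_one_vertex:
  assumes B1: "is_block V E B1" and B2: "is_block V E B2" and "B1 \<noteq> B2"
    and "x \<in> B1" "x \<in> B2" "y \<in> B1" "y \<in> B2"
  shows "x = y"
proof (rule ccontr)
  assume "x \<noteq> y"
  then have "nonsep E (B1 \<union> B2)"
    using assms by (intro nonsep_Un) (auto simp: is_block_def)
  moreover have "B1 \<union> B2 \<subseteq> V" using B1 B2 by (simp add: is_block_def)
  moreover have "B1 \<subset> B1 \<union> B2 \<or> B2 \<subset> B1 \<union> B2" using \<open>B1 \<noteq> B2\<close> by blast
  ultimately show False using B1 B2 unfolding is_block_def by (metis sup_commute)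
qed

lemma block_neighbor_avoiding:
  assumes g: "graph V E" and B: "is_block V E B" and card: "3 \<le> card B"
    and v: "v \<in> B" and y: "y \<noteq> v"
  obtains b where "b \<in> B" "b \<noteq> y" "{v, b} \<in> E" "b \<noteq> v"
proof -
  have nB: "nonsep E B" using B by (simp add: is_block_def)
  have "connected_on E (B - {y})"
  proof (cases "y \<in> B")
    case True
    then show ?thesis using nB v y by (auto simp: nonsep_def)
  qed (use nB in \<open>simp add: nonsep_def\<close>)
  moreover obtain z where "z \<in> B" "z \<noteq> v" "z \<noteq> y" using card_ge_3_ex_other[OF card] .
  ultimately obtain b where "b \<in> B - {y}" "{v, b} \<in> E"
    using v y by (elim connected_on_neighbor[of E "B - {y}" v z]) auto
  then show thesis using that graph_edge[OF g, of v b] by blast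
qed

lemma common_vertex_separates_blocks:
  assumes g: "graph V E" and B1: "is_block V E B1" and B2: "is_block V E B2" and "B1 \<noteq> B2"
    and x: "x \<in> B1" "x \<in> B2" and u1: "u1 \<in> B1" "u1 \<noteq> x" and u2: "u2 \<in> B2" "u2 \<noteq> x"
  shows "\<not> (adj_in E (V - {x}))\<^sup>*\<^sup>* u1 u2"
proof
  assume u1u2: "(adj_in E (V - {x}))\<^sup>*\<^sup>* u1 u2"
  have nB2: "nonsep E B2" and B2V: "B2 \<subseteq> V" using B2 by (auto simp: is_block_def)
  obtain q where q: "q \<in> B2" "{x, q} \<in> E"
    using connected_on_neighbor[of E B2 x u2] nB2 x u2 by (auto simp: nonsep_def)
  have qx: "q \<noteq> x" using graph_edge[OF g q(2)] by auto
  have "connected_on E (B2 - {x})" using nB2 x u2 by (auto simp: nonsep_def)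
  then have "(adj_in E (B2 - {x}))\<^sup>*\<^sup>* u2 q" using u2 q qx unfolding connected_on_iff by blast
  then have "(adj_in E (V - {x}))\<^sup>*\<^sup>* u2 q" using B2V rtranclp_adj_in_mono[of "B2 - {x}"] by blast
  then have "(adj_in E (V - {x}))\<^sup>*\<^sup>* q u1"
    by (rule rtranclp_adj_in_sym[OF rtranclp_trans[OF u1u2]])
  moreover have qB1: "q \<notin> B1"
    using blocks_share_at_most_one_vertex[OF B1 B2 \<open>B1 \<noteq> B2\<close> x] q(1) qx by blast
  ultimately obtain w v where wv: "v \<in> (V - {x}) \<inter> B1" "(adj_in E (V - {x} - B1))\<^sup>*\<^sup>* q w" "{w, v} \<in> E"
    using rtranclp_adj_in_first_hit[of E "V - {x}" q u1 B1] u1(1) by blast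
  have "q \<in> V - {x} - B1" using q(1) qx qB1 B2V by blast
  then show False
    using block_no_detour[OF B1 x(1) _ _ _ _ q(2) wv(2,3)] wv(1) by blast
qed

definition branch_at :: "'a set \<Rightarrow> 'a set set \<Rightarrow> 'a set \<Rightarrow> 'a \<Rightarrow> 'a set" where
  "branch_at V E B v = insert v {u \<in> V - B. \<exists>w. (adj_in E (V - B))\<^sup>*\<^sup>* u w \<and> {w, v} \<in> E}"

lemma branch_at_inter_block: "v \<in> B \<Longrightarrow> branch_at V E B v \<inter> B = {v}"
  by (auto simp: branch_at_def)

lemma forced_subset_branch_at:
  assumes g: "graph V E" and B: "is_block V E B" and card: "3 \<le> card B" and v: "v \<in> B"
    and S: "S \<subseteq> branch_at V E B v"
  shows "forced E S \<subseteq> branch_at V E B v"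
proof
  fix x assume "x \<in> forced E S"
  then show "x \<in> branch_at V E B v"
  proof (induction rule: forced.induct)
    case (init s)
    with S show ?case by blast
  next
    case (force u y)
    have uy: "{u, y} \<in> E" and y: "y \<in> V" using force.hyps graph_edge[OF g] by auto
    show ?case
    proof (cases "u = v")
      case True
      then have "y \<noteq> v" using graph_edge[OF g uy] by auto
      then obtain b where "b \<in> B" "b \<noteq> y" "{v, b} \<in> E" "b \<noteq> v"
        using block_neighbor_avoiding[OF g B card v] by metis
      then have "b \<in> branch_at V E B v \<inter> B" using force.IH(2) True by blast
      with \<open>b \<noteq> v\<close> show ?thesis using branch_at_inter_block[OF v] by blast
    next
      case False
      then obtain w where u: "u \<in> V - B" "(adj_in E (V - B))\<^sup>*\<^sup>* u w" "{w, v} \<in> E"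
        using force.IH(1) by (auto simp: branch_at_def)
      consider "y = v" | "y \<in> B" "y \<noteq> v" | "y \<notin> B" by blast
      then show ?thesis
      proof cases
        case 2
        have "{y, u} \<in> E" using uy by (simp add: insert_commute)
        then show ?thesis using block_no_detour[OF B _ v _ _ u(1) _ u(2,3)] 2 by blast
      next
        case 3
        then have "adj_in E (V - B) y u" using uy y u(1) by (auto simp: adj_in_def insert_commute)
        then have "(adj_in E (V - B))\<^sup>*\<^sup>* y w" using u(2) by (rule converse_rtranclp_into_rtranclp)
        with 3 y u(3) show ?thesis by (auto simp: branch_at_def)
      qed (simp add: branch_at_def)
    qed
  qed
qed

lemma connected_subset_branch_at:
  assumes conn: "connected_on E V" and B: "is_block V E B"
    and S: "connected_on E S" "S \<subseteq> V" and few: "\<forall>x\<in>S \<inter> B. \<forall>y\<in>S \<inter> B. x = y"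
  obtains v where "v \<in> B" "S \<subseteq> branch_at V E B v"
proof (cases "S \<inter> B = {}")
  case True
  obtain s0 b where s0: "s0 \<in> S" and b: "b \<in> B"
    using S(1) B by (auto simp: connected_on_def is_block_def nonsep_def)
  have "(adj_in E V)\<^sup>*\<^sup>* s0 b" using conn s0 b S(2) B unfolding connected_on_iff is_block_def by blast
  then obtain w v where wv: "v \<in> V \<inter> B" "(adj_in E (V - B))\<^sup>*\<^sup>* s0 w" "{w, v} \<in> E"
    using rtranclp_adj_in_first_hit[of E V s0 b B] b s0 True by blast
  have "s \<in> branch_at V E B v" if s: "s \<in> S" for s
  proof -
    have "(adj_in E S)\<^sup>*\<^sup>* s s0" using S(1) s s0 unfolding connected_on_iff by blast
    then have "(adj_in E (V - B))\<^sup>*\<^sup>* s s0" using S(2) True rtranclp_adj_in_mono[of S] by blast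
    then have "(adj_in E (V - B))\<^sup>*\<^sup>* s w" using wv(2) by (rule rtranclp_trans)
    then show ?thesis using s S(2) True wv(3) by (auto simp: branch_at_def)
  qed
  with wv(1) that show thesis by blast
next
  case False
  then obtain v where v: "v \<in> S" "v \<in> B" by blast
  then have SB: "S \<inter> B = {v}" using few by blast
  have "s \<in> branch_at V E B v" if s: "s \<in> S" "s \<noteq> v" for s
  proof -
    have "(adj_in E S)\<^sup>*\<^sup>* s v" using S(1) s v unfolding connected_on_iff by blast
    then obtain w where w: "(adj_in E (S - {v}))\<^sup>*\<^sup>* s w" "{w, v} \<in> E"
      using rtranclp_adj_in_first_hit[of E S s v "{v}"] s(2) by blast
    have "S - {v} \<subseteq> V - B" using SB S(2) by blast
    then have "(adj_in E (V - B))\<^sup>*\<^sup>* s w" using w(1) by (rule rtranclp_adj_in_mono)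
    then show ?thesis using s S(2) SB w(2) by (auto simp: branch_at_def)
  qed
  then have "S \<subseteq> branch_at V E B v" by (auto simp: branch_at_def)
  with v(2) that show thesis by blast
qed

lemma connected_forcing_set_meets_block_twice:
  assumes g: "graph V E" and conn: "connected_on E V" and B: "is_block V E B" and card: "3 \<le> card B"
    and S: "connected_forcing_set V E S"
  shows "\<exists>x\<in>S \<inter> B. \<exists>y\<in>S \<inter> B. x \<noteq> y"
proof (rule ccontr)
  assume "\<not> ?thesis"
  moreover have fs: "S \<subseteq> V" "V \<subseteq> forced E S" and "connected_on E S"
    using S by (auto simp: connected_forcing_set_def forcing_set_def)
  ultimately obtain v where v: "v \<in> B" "S \<subseteq> branch_at V E B v"
    using connected_subset_branch_at[OF conn B] by blast
  obtain z where "z \<in> B" "z \<noteq> v" using card_ge_3_ex_other[OF card] by blast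
  moreover have "B \<subseteq> branch_at V E B v"
    using fs(2) forced_subset_branch_at[OF g B card v] B by (auto simp: is_block_def)
  ultimately show False using branch_at_inter_block[OF v(1)] by blast
qed

text \<open>The graph distance from r is the intended instance; only these two properties are used.\<close>

definition descends_to :: "'a set set \<Rightarrow> 'a set \<Rightarrow> 'a \<Rightarrow> ('a \<Rightarrow> nat) \<Rightarrow> bool" where
  "descends_to E V r d \<longleftrightarrow> d r = 0 \<and> (\<forall>v\<in>V - {r}. \<exists>v'\<in>V. {v', v} \<in> E \<and> d v' < d v)"

lemma descends_toE:
  assumes "descends_to E V r d" "v \<in> V" "v \<noteq> r"
  obtains v' where "v' \<in> V" "{v', v} \<in> E" "d v' < d v"
  using assms unfolding descends_to_def by blast

lemma connected_on_ex_descends_to: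
  assumes conn: "connected_on E V" and r: "r \<in> V"
  shows "\<exists>d. descends_to E V r d"
proof -
  let ?R = "adj_in E V"
  define d where "d v = (LEAST n. (?R ^^ n) r v)" for v
  have reach: "(?R ^^ d v) r v" if "v \<in> V" for v
  proof -
    have "\<exists>n. (?R ^^ n) r v" using conn r that unfolding connected_on_iff rtranclp_power by blast
    then show ?thesis unfolding d_def by (rule LeastI_ex)
  qed
  have least: "d v \<le> n" if "(?R ^^ n) r v" for v n
    using that unfolding d_def by (rule Least_le)
  have "\<exists>v'\<in>V. {v', v} \<in> E \<and> d v' < d v" if v: "v \<in> V - {r}" for v
  proof -
    obtain k where "d v = Suc k" using reach[of v] v by (cases "d v") auto
    then obtain v' where v': "(?R ^^ k) r v'" "?R v' v" using reach[of v] v by (auto elim: relpowp_Suc_E)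
    then show ?thesis using least[OF v'(1)] \<open>d v = Suc k\<close> by (auto simp: adj_in_def)
  qed
  moreover have "d r = 0" using least[of 0 r] by simp
  ultimately show ?thesis unfolding descends_to_def by blast
qed

lemma descends_to_walk_below:
  assumes d: "descends_to E V r d" and v: "v \<in> V" "d v < m"
  shows "(adj_in E {u \<in> V. d u < m})\<^sup>*\<^sup>* v r"
  using v
proof (induction "d v" arbitrary: v rule: less_induct)
  case less
  show ?case
  proof (cases "v = r")
    case False
    then obtain v' where v': "v' \<in> V" "{v', v} \<in> E" "d v' < d v"
      using descends_toE[OF d less.prems(1)] by blast
    then have "adj_in E {u \<in> V. d u < m} v v'"
      using less.prems by (auto simp: adj_in_def insert_commute)
    then show ?thesis using less.hyps[OF v'(3) v'(1)] v'(3) less.prems(2)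
      by (meson converse_rtranclp_into_rtranclp order.strict_trans)
  qed simp
qed

lemma block_nearest_vertex_unique:
  assumes B: "is_block V E B" and d: "descends_to E V r d"
    and x: "x \<in> B" "\<forall>u\<in>B. d x \<le> d u" and y: "y \<in> B" "y \<noteq> x"
  shows "d x < d y"
proof (rule ccontr)
  assume "\<not> d x < d y"
  then have dy: "d y = d x" using x y by (simp add: le_antisym)
  have BV: "B \<subseteq> V" using B by (simp add: is_block_def)
  have pos: "0 < d v" if "v \<in> V" "v \<noteq> r" for v
    using descends_toE[OF d that] by (metis not_less_zero gr0I)
  have "0 < d x" using pos[of x] pos[of y] x(1) y BV dy by auto
  then have "x \<in> V - {r}" "y \<in> V - {r}" using d dy x(1) y(1) BV unfolding descends_to_def by auto
  then obtain x' y' where x': "x' \<in> V" "{x', x} \<in> E" "d x' < d x"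
    and y': "y' \<in> V" "{y', y} \<in> E" "d y' < d x"
    using descends_toE[OF d, of x] descends_toE[OF d, of y] dy by (metis Diff_iff singletonI)
  define A where "A = {u \<in> V. d u < d x}"
  have "(adj_in E A)\<^sup>*\<^sup>* x' r" "(adj_in E A)\<^sup>*\<^sup>* y' r"
    using descends_to_walk_below[OF d] x' y' unfolding A_def by blast+
  then have "(adj_in E A)\<^sup>*\<^sup>* x' y'" by (rule rtranclp_trans[OF _ rtranclp_adj_in_sym])
  moreover have "A \<subseteq> V - B" using x(2) by (auto simp: A_def)
  moreover have "{x, x'} \<in> E" using x'(2) by (simp add: insert_commute)
  ultimately show False
    using block_no_detour[OF B x(1) y(1) y(2)[symmetric], of A x' y'] x' y'(2) by (auto simp: A_def)
qed

lemma block_nearer_than_vertex_unique: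
  assumes g: "graph V E" and d: "descends_to E V r d"
    and B1: "is_block V E B1" and B2: "is_block V E B2" and x: "x \<in> B1" "x \<in> B2"
    and u1: "u1 \<in> B1" "d u1 < d x" and u2: "u2 \<in> B2" "d u2 < d x"
  shows "B1 = B2"
proof (rule ccontr)
  assume "B1 \<noteq> B2"
  have "u1 \<in> V" "u2 \<in> V" using u1 u2 B1 B2 by (auto simp: is_block_def)
  then have "(adj_in E {u \<in> V. d u < d x})\<^sup>*\<^sup>* u1 r" "(adj_in E {u \<in> V. d u < d x})\<^sup>*\<^sup>* u2 r"
    using descends_to_walk_below[OF d] u1(2) u2(2) by auto
  then have "(adj_in E {u \<in> V. d u < d x})\<^sup>*\<^sup>* u1 u2"
    by (rule rtranclp_trans[OF _ rtranclp_adj_in_sym])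
  then have "(adj_in E (V - {x}))\<^sup>*\<^sup>* u1 u2" by (rule rtranclp_adj_in_mono[rotated]) auto
  with common_vertex_separates_blocks[OF g B1 B2 \<open>B1 \<noteq> B2\<close> x] u1 u2 show False by auto
qed

lemma block_has_far_forcing_vertex:
  assumes g: "graph V E" and conn: "connected_on E V" and S: "connected_forcing_set V E S"
    and d: "descends_to E V r d" and B: "is_block V E B" and card: "3 \<le> card B"
  shows "\<exists>x\<in>S \<inter> B. \<exists>u\<in>B. d u < d x"
proof -
  obtain x1 x2 where x12: "x1 \<in> S \<inter> B" "x2 \<in> S \<inter> B" "x1 \<noteq> x2"
    using connected_forcing_set_meets_block_twice[OF g conn B card S] by blast
  obtain p where p: "p \<in> B" "\<forall>u\<in>B. d p \<le> d u"
    using ex_has_least_nat[of "\<lambda>u. u \<in> B" x1 d] x12(1) by blast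
  obtain x where "x \<in> S \<inter> B" "x \<noteq> p" using x12 by blast
  then show ?thesis using block_nearest_vertex_unique[OF B d p] p(1) by blast
qed

lemma finite_blocks: "finite V \<Longrightarrow> finite {B. is_block V E B \<and> P B}"
  by (rule finite_subset[of _ "Pow V"]) (auto simp: is_block_def)

lemma b_lt_card_connected_forcing_set:
  assumes g: "graph V E" and conn: "connected_on E V" and S: "connected_forcing_set V E S"
  shows "b V E < card S"
proof -
  have SV: "S \<subseteq> V" and "connected_on E S"
    using S by (auto simp: connected_forcing_set_def forcing_set_def)
  then obtain r where r: "r \<in> S" by (auto simp: connected_on_def)
  obtain d where d: "descends_to E V r d"
    using connected_on_ex_descends_to[OF conn] r SV by blast
  have finS: "finite S" using g SV by (auto simp: graph_def intro: finite_subset)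
  define BB where "BB = {B. is_block V E B \<and> 3 \<le> card B}"
  define f where "f B = (SOME x. x \<in> S \<inter> B \<and> (\<exists>u\<in>B. d u < d x))" for B
  have f: "f B \<in> S \<inter> B \<and> (\<exists>u\<in>B. d u < d (f B))" if "B \<in> BB" for B
  proof -
    have "\<exists>x. x \<in> S \<inter> B \<and> (\<exists>u\<in>B. d u < d x)"
      using block_has_far_forcing_vertex[OF g conn S d] that unfolding BB_def by blast
    then show ?thesis unfolding f_def by (rule someI_ex)
  qed
  have "f ` BB \<subseteq> S - {r}" using f d by (fastforce simp: descends_to_def)
  moreover have "inj_on f BB"
  proof (rule inj_onI)
    fix B1 B2 assume B12: "B1 \<in> BB" "B2 \<in> BB" "f B1 = f B2"
    have "is_block V E B1" "is_block V E B2" using B12 by (auto simp: BB_def)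
    moreover have "f B1 \<in> B1" "f B1 \<in> B2" using f[OF B12(1)] f[OF B12(2)] B12(3) by auto
    moreover obtain u1 u2 where "u1 \<in> B1" "d u1 < d (f B1)" "u2 \<in> B2" "d u2 < d (f B1)"
      using f[OF B12(1)] f[OF B12(2)] B12(3) by metis
    ultimately show "B1 = B2" by (rule block_nearer_than_vertex_unique[OF g d])
  qed
  ultimately have "card BB \<le> card (S - {r})"
    using finS by (metis card_image card_mono finite_Diff)
  also have "\<dots> < card S" using finS r by (rule card_Diff1_less)
  finally show ?thesis by (simp add: b_def BB_def)
qed

lemma finite_connected_forcing_sets: "finite V \<Longrightarrow> finite {S. connected_forcing_set V E S}"
  by (rule finite_subset[of _ "Pow V"]) (auto simp: connected_forcing_set_def forcing_set_def)

lemma F_c_le_card: "finite V \<Longrightarrow> connected_forcing_set V E S \<Longrightarrow> F_c V E \<le> card S"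
  unfolding F_c_def by (rule Min_le) (auto simp: finite_connected_forcing_sets)

lemma F_c_attained:
  assumes "finite V" "connected_on E V"
  obtains S where "connected_forcing_set V E S" "F_c V E = card S"
proof -
  have "connected_forcing_set V E V"
    using assms(2) by (auto simp: connected_forcing_set_def forcing_set_def intro: forced.init)
  then have "F_c V E \<in> card ` {S. connected_forcing_set V E S}"
    unfolding F_c_def using finite_connected_forcing_sets[OF assms(1)] by (intro Min_in) auto
  then show thesis using that by blast
qed

lemma nonsep_clique:
  assumes "X \<noteq> {}" and clique: "\<And>x y. x \<in> X \<Longrightarrow> y \<in> X \<Longrightarrow> x \<noteq> y \<Longrightarrow> {x, y} \<in> E"
  shows "nonsep E X"
proof -
  have "connected_on E Y" if "Y \<subseteq> X" "r \<in> Y" for Y r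
  proof (rule connected_onI[OF \<open>r \<in> Y\<close>])
    fix x assume "x \<in> Y"
    show "(adj_in E Y)\<^sup>*\<^sup>* x r"
    proof (cases "x = r")
      case False
      then have "adj_in E Y x r" using that clique \<open>x \<in> Y\<close> by (auto simp: adj_in_def)
      then show ?thesis by (rule r_into_rtranclp)
    qed simp
  qed
  then show ?thesis using assms(1) unfolding nonsep_def by blast
qed

text \<open>The triangles {2i, 2i+1, 2i+2} for i < k, glued at their even vertices, followed by the
  pendant edge {2k, 2k+1}, which keeps the graph free of isolated vertices when k = 0.\<close>

definition triangle_chain_adj :: "nat \<Rightarrow> nat \<Rightarrow> nat \<Rightarrow> bool" where
  "triangle_chain_adj k u v \<longleftrightarrow> u < v \<and> v \<le> 2 * k + 1 \<and> (v = u + 1 \<or> v = u + 2 \<and> even u)"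

definition triangle_chain_V :: "nat \<Rightarrow> nat set" where
  "triangle_chain_V k = {0..2 * k + 1}"

definition triangle_chain_E :: "nat \<Rightarrow> nat set set" where
  "triangle_chain_E k = {{u, v} | u v. triangle_chain_adj k u v}"

lemma triangle_chain_edge_iff:
  "{x, y} \<in> triangle_chain_E k \<longleftrightarrow> triangle_chain_adj k x y \<or> triangle_chain_adj k y x"
  unfolding triangle_chain_E_def by (auto simp: doubleton_eq_iff)

lemma graph_triangle_chain: "graph (triangle_chain_V k) (triangle_chain_E k)"
proof -
  have "\<exists>e\<in>triangle_chain_E k. v \<in> e" if "v \<in> triangle_chain_V k" for v
  proof (cases "v \<le> 2 * k")
    case True
    then have "{v, v + 1} \<in> triangle_chain_E k"
      by (simp add: triangle_chain_edge_iff triangle_chain_adj_def)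
    then show ?thesis by blast
  next
    case False
    then have "v = 2 * k + 1" using that by (simp add: triangle_chain_V_def)
    moreover have "{2 * k, 2 * k + 1} \<in> triangle_chain_E k"
      by (simp add: triangle_chain_edge_iff triangle_chain_adj_def)
    ultimately show ?thesis by blast
  qed
  moreover have "\<exists>u v. e = {u, v} \<and> u \<noteq> v \<and> u \<in> triangle_chain_V k \<and> v \<in> triangle_chain_V k"
    if e: "e \<in> triangle_chain_E k" for e
  proof -
    obtain u v where "e = {u, v}" "triangle_chain_adj k u v"
      using e unfolding triangle_chain_E_def by blast
    then show ?thesis
      by (intro exI[of _ u] exI[of _ v]) (auto simp: triangle_chain_adj_def triangle_chain_V_def)
  qed
  ultimately show ?thesis by (auto simp: graph_def triangle_chain_V_def)
qed

lemma connected_triangle_chain: "connected_on (triangle_chain_E k) (triangle_chain_V k)"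
proof (rule connected_onI[of 0])
  fix v assume "v \<in> triangle_chain_V k"
  then show "(adj_in (triangle_chain_E k) (triangle_chain_V k))\<^sup>*\<^sup>* v 0"
  proof (induction v)
    case (Suc v)
    then have "adj_in (triangle_chain_E k) (triangle_chain_V k) (Suc v) v"
      by (auto simp: adj_in_def triangle_chain_edge_iff triangle_chain_adj_def triangle_chain_V_def)
    with Suc show ?case
      by (auto simp: triangle_chain_V_def intro: converse_rtranclp_into_rtranclp)
  qed simp
qed (simp add: triangle_chain_V_def)

lemma triangle_chain_walk_avoiding_right_cut:
  "(adj_in (triangle_chain_E k) (X - {2 * i + 2}))\<^sup>*\<^sup>* u w \<Longrightarrow> u \<le> 2 * i + 1 \<Longrightarrow> w \<le> 2 * i + 1"
proof (induction rule: rtranclp_induct)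
  case (step y z)
  then have "{y, z} \<in> triangle_chain_E k" "z \<noteq> 2 * i + 2" by (auto simp: adj_in_def)
  with step.IH step.prems show ?case
    unfolding triangle_chain_edge_iff triangle_chain_adj_def by presburger
qed

lemma triangle_chain_walk_avoiding_left_cut:
  "(adj_in (triangle_chain_E k) (X - {2 * i}))\<^sup>*\<^sup>* u w \<Longrightarrow> 2 * i + 1 \<le> u \<Longrightarrow> 2 * i + 1 \<le> w"
proof (induction rule: rtranclp_induct)
  case (step y z)
  then have "{y, z} \<in> triangle_chain_E k" "z \<noteq> 2 * i" by (auto simp: adj_in_def)
  with step.IH step.prems show ?case
    unfolding triangle_chain_edge_iff triangle_chain_adj_def by presburger
qed

lemma triangle_is_block:
  assumes "i < k"
  shows "is_block (triangle_chain_V k) (triangle_chain_E k) {2 * i, 2 * i + 1, 2 * i + 2}"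
    (is "is_block ?V ?E ?T")
proof -
  have T: "?T \<subseteq> ?V" "nonsep ?E ?T"
    using assms by (auto simp: triangle_chain_V_def triangle_chain_edge_iff triangle_chain_adj_def
        intro!: nonsep_clique)
  have False if B': "?T \<subset> B'" "nonsep ?E B'" for B'
  proof -
    obtain w where w: "w \<in> B'" "w \<notin> ?T" using B'(1) by blast
    have T': "2 * i \<in> B'" "2 * i + 1 \<in> B'" "2 * i + 2 \<in> B'" using B'(1) by auto
    then have "B' - {2 * i + 2} \<noteq> {}" "B' - {2 * i} \<noteq> {}" by auto
    then have "connected_on ?E (B' - {2 * i + 2})" "connected_on ?E (B' - {2 * i})"
      using B'(2) T'(1,3) by (simp_all add: nonsep_def)
    then have "(adj_in ?E (B' - {2 * i + 2}))\<^sup>*\<^sup>* (2 * i) w" "(adj_in ?E (B' - {2 * i}))\<^sup>*\<^sup>* (2 * i + 1) w"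
      using T' w unfolding connected_on_iff by auto
    then have "w \<le> 2 * i + 1" "2 * i + 1 \<le> w"
      using triangle_chain_walk_avoiding_right_cut triangle_chain_walk_avoiding_left_cut by simp_all
    with w(2) show False by simp
  qed
  with T show ?thesis unfolding is_block_def by blast
qed

lemma b_triangle_chain_ge: "k \<le> b (triangle_chain_V k) (triangle_chain_E k)"
proof -
  let ?T = "\<lambda>i. {2 * i, 2 * i + 1, 2 * i + 2 :: nat}"
  have "inj_on ?T {..<k}"
  proof
    fix i j assume "?T i = ?T j"
    then have "2 * i \<in> ?T j" "2 * j \<in> ?T i" by auto
    then show "i = j" by auto
  qed
  then have "k = card (?T ` {..<k})" by (simp add: card_image)
  also have "\<dots> \<le> card {B. is_block (triangle_chain_V k) (triangle_chain_E k) B \<and> 3 \<le> card B}"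
  proof (rule card_mono)
    show "finite {B. is_block (triangle_chain_V k) (triangle_chain_E k) B \<and> 3 \<le> card B}"
      by (rule finite_blocks) (simp add: triangle_chain_V_def)
    show "?T ` {..<k} \<subseteq> {B. is_block (triangle_chain_V k) (triangle_chain_E k) B \<and> 3 \<le> card B}"
      using triangle_is_block by auto
  qed
  finally show ?thesis by (simp add: b_def)
qed

definition even_vertices :: "nat \<Rightarrow> nat set" where
  "even_vertices k = {v. even v \<and> v \<le> 2 * k}"

lemma even_vertices_eq_image: "even_vertices k = (\<lambda>j. 2 * j) ` {..k}"
  by (auto simp: even_vertices_def elim!: evenE)

lemma card_even_vertices: "card (even_vertices k) = k + 1"
  unfolding even_vertices_eq_image by (subst card_image) (auto simp: inj_on_def)

lemma connected_even_vertices: "connected_on (triangle_chain_E k) (even_vertices k)"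
proof (rule connected_onI[of 0])
  fix v assume "v \<in> even_vertices k"
  then obtain j where "j \<le> k" "v = 2 * j" unfolding even_vertices_eq_image by blast
  then show "(adj_in (triangle_chain_E k) (even_vertices k))\<^sup>*\<^sup>* v 0"
  proof (induction j arbitrary: v)
    case (Suc j)
    then have "adj_in (triangle_chain_E k) (even_vertices k) v (2 * j)"
      by (auto simp: adj_in_def triangle_chain_edge_iff triangle_chain_adj_def even_vertices_def)
    with Suc show ?case by (auto intro: converse_rtranclp_into_rtranclp)
  qed simp
qed (simp add: even_vertices_def)

lemma forced_odd_vertex:
  "i \<le> k \<Longrightarrow> 2 * i + 1 \<in> forced (triangle_chain_E k) (even_vertices k)"
proof (induction i)
  case 0
  show ?case
  proof (rule forced.force[of 0])
    fix w assume "{0, w} \<in> triangle_chain_E k" "w \<noteq> 2 * 0 + 1"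
    then show "w \<in> forced (triangle_chain_E k) (even_vertices k)"
      by (auto simp: triangle_chain_edge_iff triangle_chain_adj_def even_vertices_def intro: forced.init)
  qed (auto simp: triangle_chain_edge_iff triangle_chain_adj_def even_vertices_def intro: forced.init)
next
  case (Suc i)
  show ?case
  proof (rule forced.force[of "2 * Suc i"])
    fix w assume w: "{2 * Suc i, w} \<in> triangle_chain_E k" "w \<noteq> 2 * Suc i + 1"
    then have "w = 2 * i + 1 \<or> w \<in> even_vertices k"
      unfolding triangle_chain_edge_iff triangle_chain_adj_def even_vertices_def mem_Collect_eq
      by presburger
    then show "w \<in> forced (triangle_chain_E k) (even_vertices k)"
      using Suc by (auto intro: forced.init)
  qed (use Suc.prems in \<open>auto simp: triangle_chain_edge_iff triangle_chain_adj_def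
        even_vertices_def intro: forced.init\<close>)
qed

lemma connected_forcing_set_even_vertices:
  "connected_forcing_set (triangle_chain_V k) (triangle_chain_E k) (even_vertices k)"
proof -
  have "v \<in> forced (triangle_chain_E k) (even_vertices k)" if "v \<in> triangle_chain_V k" for v
  proof (cases "even v")
    case True
    with that have "v \<in> even_vertices k"
      by (simp add: even_vertices_def triangle_chain_V_def) presburger
    then show ?thesis by (rule forced.init)
  next
    case False
    then obtain i where "v = 2 * i + 1" by (metis oddE)
    with that show ?thesis using forced_odd_vertex[of i k] by (simp add: triangle_chain_V_def)
  qed
  moreover have "even_vertices k \<subseteq> triangle_chain_V k"
    by (auto simp: even_vertices_def triangle_chain_V_def)
  ultimately show ?thesis using connected_even_vertices
    by (auto simp: connected_forcing_set_def forcing_set_def)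
qed

lemma triangle_chain_sharp:
  "graph (triangle_chain_V k) (triangle_chain_E k) \<and> connected_on (triangle_chain_E k) (triangle_chain_V k)
    \<and> b (triangle_chain_V k) (triangle_chain_E k) = k \<and> F_c (triangle_chain_V k) (triangle_chain_E k) = k + 1"
proof -
  have fin: "finite (triangle_chain_V k)" by (simp add: triangle_chain_V_def)
  obtain S where S: "connected_forcing_set (triangle_chain_V k) (triangle_chain_E k) S"
    and F_c: "F_c (triangle_chain_V k) (triangle_chain_E k) = card S"
    using F_c_attained[OF fin connected_triangle_chain] .
  \<comment> \<open>The lower bound rules out 2-connected blocks other than the k triangles.\<close>
  have "b (triangle_chain_V k) (triangle_chain_E k) < F_c (triangle_chain_V k) (triangle_chain_E k)"
    using b_lt_card_connected_forcing_set[OF graph_triangle_chain connected_triangle_chain S] F_c by simp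
  moreover have "F_c (triangle_chain_V k) (triangle_chain_E k) \<le> k + 1"
    using F_c_le_card[OF fin connected_forcing_set_even_vertices] by (simp add: card_even_vertices)
  ultimately show ?thesis
    using b_triangle_chain_ge[of k] graph_triangle_chain connected_triangle_chain by simp
qed

theorem theorem5:
  fixes V :: "'a set" and E :: "'a set set"
  assumes "graph V E" and "connected_on E V"
  shows "F_c V E \<ge> b V E + 1
    \<and> (\<forall>k::nat. \<exists>(W::nat set) F. graph W F \<and> connected_on F W \<and> b W F = k \<and> F_c W F = k + 1)"
proof
  have "finite V" using assms(1) by (simp add: graph_def)
  then obtain S where S: "connected_forcing_set V E S" and "F_c V E = card S"
    using F_c_attained assms(2) by blast
  with b_lt_card_connected_forcing_set[OF assms S] show "F_c V E \<ge> b V E + 1" by simp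
next
  show "\<forall>k::nat. \<exists>(W::nat set) F. graph W F \<and> connected_on F W \<and> b W F = k \<and> F_c W F = k + 1"
    using triangle_chain_sharp by blast
qed

end
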